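(* Let $\beta\ne0$, and consider the episodic MDP with finite state space, tabular deterministic policy $\mu_\theta(s)=\theta_s$, soft value functions $V^\beta_{\mu_\theta},Q^\beta_{\mu_\theta}$ and behavior state weights $\rho_b$ as in the context. Define $g(\mu_\theta)$ as the parameter vector whose block for state $s$ is $$g(\mu_\theta)_s=\rho_b(s)\,\nabla_aQ^\beta_{\mu_\theta}(s,a)\big|_{a=\mu_\theta(s)}\in\mathbb{R}^m$$ (i.e. $g(\mu_\theta)=\sum_{s}\rho_b(s)\nabla_\theta\mu_\theta(s)\nabla_aQ^\beta_{\mu_\theta}(s,a)|_{a=\mu_\theta(s)}$), and let $\theta'=\theta+\alpha\,g(\mu_\theta)$. Then there exists $\epsilon>0$ such that for all $0<\alpha<\epsilon$, $$V^\beta_{\mu_\theta}(s)\le V^\beta_{\mu_{\theta'}}(s)\qquad\text{for all }s\in\mathcal S.$$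
   Context: Episodic MDP: finite state space $\mathcal S$, action space $\mathcal A=\mathbb{R}^m$, transition probabilities $p(s'|s,a)$ (a probability mass function on $\mathcal S$ for each $(s,a)$) and reward $r(s,a)$, with $a\mapsto p(s'|s,a)$ and $a\mapsto r(s,a)$ continuously differentiable. There is a set $\mathcal S_{\rm term}\subset\mathcal S$ of absorbing terminal states with $r(s,a)=0$ and $p(\mathcal S_{\rm term}|s,a)=1$ for $s\in\mathcal S_{\rm term}$, and an integer $T$ such that from any state, under any sequence of actions, the state lies in $\mathcal S_{\rm term}$ after at most $T$ transitions with probability 1. Tabular (linear) deterministic policy: $\theta=(\theta_s)_{s\in\mathcal S}$ with $\theta_s\in\mathbb{R}^m$ and $\mu_\theta(s)=\theta_s$. Soft value functions of a deterministic policy $\mu$: $V^\beta_\mu(s)=\frac1\beta\log\mathbb{E}\big[e^{\beta\sum_{t\ge1}r_t}\mid s_1=s\big]$ and $Q^\beta_\mu(s,a)=\frac1\beta\log\mathbb{E}\big[e^{\beta\sum_{t\ge1}r_t}\mid s_1=s,a_1=a\big]$, where $a_t=\mu(s_t)$ for $t\ge2$ (and $t\ge1$ for $V$); the sums are a.s. finite. They satisfy $V^\beta_\mu(s)=Q^\beta_\mu(s,\mu(s))$ and $Q^\beta_\mu(s,a)=r(s,a)+\frac1\beta\log\sum_{s'}p(s'|s,a)e^{\beta V^\beta_\mu(s')}$. $\rho_b:\mathcal S\to[0,\infty)$ is the state distribution of an arbitrary behavior policy (any nonnegative weights). *)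

theory Defs
  imports "HOL-Analysis.Analysis"
begin

text \<open>Conventions. States: a finite type 's. Actions: real ^ 'm (i.e. R^m).
  Transition probabilities: p s a s' = p(s'|s,a). Reward: r s a.
  A deterministic (stationary) policy is mu :: 's => real^'m.\<close>

definition C1_real :: "('v::real_inner \<Rightarrow> real) \<Rightarrow> bool" where
  "C1_real f \<longleftrightarrow> (\<exists>G. (\<forall>a. GDERIV f a :> G a) \<and> continuous_on UNIV G)"

definition grad :: "('v::real_inner \<Rightarrow> real) \<Rightarrow> 'v \<Rightarrow> 'v" where
  "grad f a = (SOME D. GDERIV f a :> D)"

definition episodic_mdp ::
  "('s::finite \<Rightarrow> real^'m \<Rightarrow> 's \<Rightarrow> real) \<Rightarrow> ('s \<Rightarrow> real^'m \<Rightarrow> real) \<Rightarrow> 's set \<Rightarrow> nat \<Rightarrow> bool" where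
  "episodic_mdp p r Sterm T \<longleftrightarrow>
     (\<forall>s a s'. 0 \<le> p s a s') \<and>
     (\<forall>s a. (\<Sum>s'\<in>UNIV. p s a s') = 1) \<and>
     (\<forall>s s'. C1_real (\<lambda>a. p s a s')) \<and>
     (\<forall>s. C1_real (\<lambda>a. r s a)) \<and>
     (\<forall>s\<in>Sterm. \<forall>a. r s a = 0 \<and> (\<Sum>s'\<in>Sterm. p s a s') = 1) \<and>
     (\<forall>ss :: nat \<Rightarrow> 's. \<forall>as :: nat \<Rightarrow> real^'m.
        (\<forall>i<T. 0 < p (ss i) (as i) (ss (Suc i))) \<longrightarrow> ss T \<in> Sterm)"

text \<open>exp_ret p r beta mu k s = E[ exp(beta * sum_{t=1}^k r_t) | s_1 = s ] under
  policy mu (computed by the tower rule, backwards in time).\<close>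
fun exp_ret ::
  "('s::finite \<Rightarrow> real^'m \<Rightarrow> 's \<Rightarrow> real) \<Rightarrow> ('s \<Rightarrow> real^'m \<Rightarrow> real) \<Rightarrow> real
   \<Rightarrow> ('s \<Rightarrow> real^'m) \<Rightarrow> nat \<Rightarrow> 's \<Rightarrow> real" where
  "exp_ret p r \<beta> \<mu> 0 s = 1"
| "exp_ret p r \<beta> \<mu> (Suc k) s =
     exp (\<beta> * r s (\<mu> s)) * (\<Sum>s'\<in>UNIV. p s (\<mu> s) s' * exp_ret p r \<beta> \<mu> k s')"

text \<open>E[ exp(beta * sum_{t>=1} r_t) | s_1 = s ] as the limit of the finite-horizon values.\<close>
definition exp_ret_inf ::
  "('s::finite \<Rightarrow> real^'m \<Rightarrow> 's \<Rightarrow> real) \<Rightarrow> ('s \<Rightarrow> real^'m \<Rightarrow> real) \<Rightarrow> real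
   \<Rightarrow> ('s \<Rightarrow> real^'m) \<Rightarrow> 's \<Rightarrow> real" where
  "exp_ret_inf p r \<beta> \<mu> s = lim (\<lambda>k. exp_ret p r \<beta> \<mu> k s)"

definition soft_V ::
  "('s::finite \<Rightarrow> real^'m \<Rightarrow> 's \<Rightarrow> real) \<Rightarrow> ('s \<Rightarrow> real^'m \<Rightarrow> real) \<Rightarrow> real
   \<Rightarrow> ('s \<Rightarrow> real^'m) \<Rightarrow> 's \<Rightarrow> real" where
  "soft_V p r \<beta> \<mu> s = ln (exp_ret_inf p r \<beta> \<mu> s) / \<beta>"

text \<open>Q(s,a) = (1/beta) log E[exp(beta sum r_t) | s_1=s, a_1=a], following mu from t=2.\<close>
definition soft_Q ::
  "('s::finite \<Rightarrow> real^'m \<Rightarrow> 's \<Rightarrow> real) \<Rightarrow> ('s \<Rightarrow> real^'m \<Rightarrow> real) \<Rightarrow> real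
   \<Rightarrow> ('s \<Rightarrow> real^'m) \<Rightarrow> 's \<Rightarrow> real^'m \<Rightarrow> real" where
  "soft_Q p r \<beta> \<mu> s a =
     ln (exp (\<beta> * r s a) * (\<Sum>s'\<in>UNIV. p s a s' * exp_ret_inf p r \<beta> \<mu> s')) / \<beta>"

definition pg_dir ::
  "('s::finite \<Rightarrow> real^'m \<Rightarrow> 's \<Rightarrow> real) \<Rightarrow> ('s \<Rightarrow> real^'m \<Rightarrow> real) \<Rightarrow> real
   \<Rightarrow> ('s \<Rightarrow> real) \<Rightarrow> ('s \<Rightarrow> real^'m) \<Rightarrow> 's \<Rightarrow> real^'m" where
  "pg_dir p r \<beta> \<rho> \<theta> s = \<rho> s *\<^sub>R grad (\<lambda>a. soft_Q p r \<beta> \<theta> s a) (\<theta> s)"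

end

theory Submission
  imports Defs
begin

(* Every trajectory is absorbed after at most T steps, so the exponential return
   W_mu = E[exp(beta * sum r)] of a policy mu is the T-fold iterate of the monotone Bellman
   operator  B_mu f s = exp(beta r(s, mu s)) * sum_s' p(s'|s, mu s) f s'  applied to any f that
   is 1 on the terminal states.  Hence W_mu is a fixed point of B_mu, V = ln W_mu / beta, and
   Q(s,a) is ln of the one-step backup of W_mu at (s,a), divided by beta.
   A short enough step along rho(s) grad_a Q(s,a) does not decrease Q(s,.) at theta_s, and as
   there are finitely many states one step bound serves all of them.  Then V_theta <= Q_theta(., theta'),
   i.e. W_theta <= B_theta' W_theta if beta > 0 (>= if beta < 0); iterating the monotone operator
   B_theta' T times gives W_theta <= W_theta' (resp. >=), which is V_theta <= V_theta' in both cases. *)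

lemma GDERIV_sum:
  "(\<And>i. i \<in> I \<Longrightarrow> GDERIV (f i) x :> D i) \<Longrightarrow> GDERIV (\<lambda>x. \<Sum>i\<in>I. f i x) x :> (\<Sum>i\<in>I. D i)"
  by (induction I rule: infinite_finite_induct) (auto intro: GDERIV_add GDERIV_const)

lemma funpow_le_self:
  fixes F :: "'a::order \<Rightarrow> 'a"
  assumes "mono F" "F x \<le> x"
  shows "(F ^^ n) x \<le> x"
proof (induction n)
  case (Suc n)
  have "(F ^^ Suc n) x \<le> F x" using monoD[OF assms(1) Suc] by simp
  with assms(2) show ?case by order
qed simp

lemma gradient_step_nondecreasing:
  fixes q :: "'a::real_inner \<Rightarrow> real"
  assumes "0 \<le> \<rho>" and "GDERIV q x :> D"
  shows "\<forall>\<^sub>F \<alpha> in at_right 0. q x \<le> q (x + \<alpha> *\<^sub>R (\<rho> *\<^sub>R D))"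
proof (cases "\<rho> *\<^sub>R D = 0")
  case True
  show ?thesis unfolding True by simp
next
  case False
  define d where "d = \<rho> *\<^sub>R D"
  have "0 < d \<bullet> D" using False assms(1) by (auto simp: d_def)
  have line: "((\<lambda>t. x + t *\<^sub>R d) has_derivative (\<lambda>t. t *\<^sub>R d)) (at 0)"
    by (auto intro!: derivative_eq_intros)
  have "(q has_derivative (\<lambda>h. h \<bullet> D)) (at ((\<lambda>t. x + t *\<^sub>R d) 0))"
    using assms(2) by (simp add: gderiv_def)
  from has_derivative_compose[OF line this]
  have "((\<lambda>t. q (x + t *\<^sub>R d)) has_real_derivative d \<bullet> D) (at 0)"
    unfolding has_field_derivative_def by (rule has_derivative_eq_rhs) (auto simp: fun_eq_iff)
  from DERIV_pos_inc_right[OF this \<open>0 < d \<bullet> D\<close>] obtain e where "e > 0"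
    and "\<And>h. 0 < h \<Longrightarrow> h < e \<Longrightarrow> q x < q (x + h *\<^sub>R d)" by auto
  then show ?thesis
    unfolding d_def eventually_at_right_field by (auto intro!: exI[of _ e] less_imp_le)
qed

locale episodic =
  fixes p :: "'s::finite \<Rightarrow> real^'m \<Rightarrow> 's \<Rightarrow> real"
    and r :: "'s \<Rightarrow> real^'m \<Rightarrow> real"
    and Sterm :: "'s set" and T :: nat and \<beta> :: real
  assumes episodic: "episodic_mdp p r Sterm T"
begin

lemma transition_nonneg: "0 \<le> p s a s'"
  using episodic unfolding episodic_mdp_def by blast

lemma transition_sum_one: "(\<Sum>s'\<in>UNIV. p s a s') = 1"
  using episodic unfolding episodic_mdp_def by blast

lemma terminal_reward: "s \<in> Sterm \<Longrightarrow> r s a = 0"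
  using episodic unfolding episodic_mdp_def by blast

lemma terminal_transition_sum_one: "s \<in> Sterm \<Longrightarrow> (\<Sum>s'\<in>Sterm. p s a s') = 1"
  using episodic unfolding episodic_mdp_def by blast

lemma terminal_absorbing:
  assumes "s \<in> Sterm" "s' \<notin> Sterm"
  shows "p s a s' = 0"
proof -
  have "(\<Sum>x\<in>UNIV. p s a x) = (\<Sum>x\<in>Sterm. p s a x) + (\<Sum>x\<in>UNIV - Sterm. p s a x)"
    by (metis add.commute finite sum.subset_diff top_greatest)
  then have "(\<Sum>x\<in>UNIV - Sterm. p s a x) = 0"
    by (simp add: transition_sum_one terminal_transition_sum_one[OF assms(1)])
  then show ?thesis
    using assms(2) by (simp add: sum_nonneg_eq_0_iff transition_nonneg)
qed

definition absorbed_within :: "nat \<Rightarrow> 's \<Rightarrow> bool" where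
  "absorbed_within k s \<longleftrightarrow>
     (\<forall>ss as. ss 0 = s \<and> (\<forall>i<k. 0 < p (ss i) (as i) (ss (Suc i))) \<longrightarrow> ss k \<in> Sterm)"

lemma absorbed_within_horizon: "absorbed_within T s"
  using episodic unfolding episodic_mdp_def absorbed_within_def by blast

lemma absorbed_within_0: "absorbed_within 0 s \<Longrightarrow> s \<in> Sterm"
  unfolding absorbed_within_def by (auto dest: spec[where x = "\<lambda>_. s"])

lemma absorbed_within_Suc:
  assumes "absorbed_within (Suc k) s" and "0 < p s a s'"
  shows "absorbed_within k s'"
  unfolding absorbed_within_def
proof (intro allI impI)
  fix ss :: "nat \<Rightarrow> 's" and as :: "nat \<Rightarrow> real^'m"
  assume path: "ss 0 = s' \<and> (\<forall>i<k. 0 < p (ss i) (as i) (ss (Suc i)))"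
  define ss' where "ss' i = (if i = 0 then s else ss (i - 1))" for i
  define as' where "as' i = (if i = 0 then a else as (i - 1))" for i
  have "\<forall>i<Suc k. 0 < p (ss' i) (as' i) (ss' (Suc i))"
    using path assms(2) by (auto simp: ss'_def as'_def less_Suc_eq_0_disj)
  moreover have "ss' 0 = s" by (simp add: ss'_def)
  ultimately have "ss' (Suc k) \<in> Sterm"
    using assms(1) unfolding absorbed_within_def by blast
  then show "ss k \<in> Sterm" by (simp add: ss'_def)
qed

definition backup :: "('s \<Rightarrow> real) \<Rightarrow> 's \<Rightarrow> real^'m \<Rightarrow> real" where
  "backup f s a = exp (\<beta> * r s a) * (\<Sum>s'\<in>UNIV. p s a s' * f s')"

definition bellman :: "('s \<Rightarrow> real^'m) \<Rightarrow> ('s \<Rightarrow> real) \<Rightarrow> 's \<Rightarrow> real" where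
  "bellman \<mu> f s = backup f s (\<mu> s)"

lemma mono_bellman: "mono (bellman \<mu>)"
  by (auto simp: mono_def le_fun_def bellman_def backup_def
      intro!: mult_left_mono sum_mono transition_nonneg)

lemma backup_pos:
  assumes "\<And>x. 0 < f x"
  shows "0 < backup f s a"
proof -
  obtain s' where "p s a s' \<noteq> 0"
    using transition_sum_one[of s a] by (metis sum.neutral zero_neq_one)
  then have "0 < p s a s' * f s'"
    using transition_nonneg[of s a s'] assms by simp
  then have "0 < (\<Sum>x\<in>UNIV. p s a x * f x)"
    by (rule sum_pos2[OF finite UNIV_I]) (simp add: assms less_imp_le transition_nonneg)
  then show ?thesis by (simp add: backup_def)
qed

lemma bellman_terminal:
  assumes "s \<in> Sterm" and "\<forall>x\<in>Sterm. f x = 1"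
  shows "bellman \<mu> f s = 1"
proof -
  have "(\<Sum>x\<in>UNIV. p s (\<mu> s) x * f x) = (\<Sum>x\<in>Sterm. p s (\<mu> s) x)"
    by (subst sum.mono_neutral_right[of UNIV Sterm]) (auto simp: terminal_absorbing assms)
  also have "\<dots> = 1"
    using assms(1) by (rule terminal_transition_sum_one)
  finally show ?thesis
    using assms(1) by (simp add: bellman_def backup_def terminal_reward)
qed

lemma bellman_pow_terminal:
  "\<forall>x\<in>Sterm. f x = 1 \<Longrightarrow> \<forall>x\<in>Sterm. (bellman \<mu> ^^ k) f x = 1"
  by (induction k) (auto simp: bellman_terminal)

lemma bellman_pow_cong:
  "absorbed_within k s \<Longrightarrow> \<forall>x\<in>Sterm. f x = g x \<Longrightarrow> (bellman \<mu> ^^ k) f s = (bellman \<mu> ^^ k) g s"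
proof (induction k arbitrary: s)
  case 0
  then show ?case by (simp add: absorbed_within_0)
next
  case (Suc k)
  have "(bellman \<mu> ^^ k) f s' = (bellman \<mu> ^^ k) g s'" if "0 < p s (\<mu> s) s'" for s'
    using Suc.IH[OF absorbed_within_Suc[OF Suc.prems(1) that] Suc.prems(2)] .
  then have summands: "p s (\<mu> s) s' * (bellman \<mu> ^^ k) f s' = p s (\<mu> s) s' * (bellman \<mu> ^^ k) g s'" for s'
    using transition_nonneg[of s "\<mu> s" s'] by (cases "p s (\<mu> s) s' = 0") auto
  show ?case by (simp add: bellman_def[of \<mu> _ s] backup_def summands)
qed

lemma exp_ret_eq_bellman_pow: "exp_ret p r \<beta> \<mu> k = (bellman \<mu> ^^ k) (\<lambda>_. 1)"
  by (induction k) (auto simp: bellman_def backup_def)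

lemma bellman_pow_horizon:
  assumes "\<forall>x\<in>Sterm. f x = 1"
  shows "(bellman \<mu> ^^ T) f = exp_ret_inf p r \<beta> \<mu>"
proof -
  have horizon: "(bellman \<mu> ^^ T) f = (bellman \<mu> ^^ T) g" if "\<forall>x\<in>Sterm. g x = 1" for g
  proof
    fix s
    show "(bellman \<mu> ^^ T) f s = (bellman \<mu> ^^ T) g s"
      using absorbed_within_horizon assms that by (auto intro: bellman_pow_cong)
  qed
  have "exp_ret p r \<beta> \<mu> k = (bellman \<mu> ^^ T) f" if "T \<le> k" for k
  proof -
    have "bellman \<mu> ^^ k = bellman \<mu> ^^ T \<circ> bellman \<mu> ^^ (k - T)"
      using that by (simp flip: funpow_add)
    then have "exp_ret p r \<beta> \<mu> k = (bellman \<mu> ^^ T) ((bellman \<mu> ^^ (k - T)) (\<lambda>_. 1))"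
      by (simp add: exp_ret_eq_bellman_pow)
    also have "\<dots> = (bellman \<mu> ^^ T) f"
      by (rule horizon[symmetric]) (simp add: bellman_pow_terminal)
    finally show ?thesis .
  qed
  then have "(\<lambda>k. exp_ret p r \<beta> \<mu> k s) \<longlonglongrightarrow> (bellman \<mu> ^^ T) f s" for s
    by (intro tendsto_eventually) (auto simp: eventually_sequentially intro!: exI[of _ T])
  then have "exp_ret_inf p r \<beta> \<mu> s = (bellman \<mu> ^^ T) f s" for s
    unfolding exp_ret_inf_def by (rule limI)
  then show ?thesis by (simp add: fun_eq_iff)
qed

lemma exp_ret_inf_pos: "0 < exp_ret_inf p r \<beta> \<mu> s"
proof -
  have "0 < (bellman \<mu> ^^ k) (\<lambda>_. 1) x" for k x
    by (induction k arbitrary: x) (auto simp: bellman_def intro: backup_pos)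
  then show ?thesis
    using bellman_pow_horizon[of "\<lambda>_. 1"] by metis
qed

lemma exp_ret_inf_terminal: "\<forall>x\<in>Sterm. exp_ret_inf p r \<beta> \<mu> x = 1"
  using bellman_pow_horizon[of "\<lambda>_. 1"] bellman_pow_terminal[of "\<lambda>_. 1"] by metis

lemma bellman_exp_ret_inf: "bellman \<mu> (exp_ret_inf p r \<beta> \<mu>) = exp_ret_inf p r \<beta> \<mu>"
proof -
  have "bellman \<mu> (exp_ret_inf p r \<beta> \<mu>) = (bellman \<mu> ^^ T) (bellman \<mu> (\<lambda>_. 1))"
    using bellman_pow_horizon[of "\<lambda>_. 1"] by (simp flip: funpow_swap1)
  also have "\<dots> = exp_ret_inf p r \<beta> \<mu>"
    by (rule bellman_pow_horizon) (simp add: bellman_terminal)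
  finally show ?thesis .
qed

lemma soft_Q_eq_backup: "soft_Q p r \<beta> \<theta> s a = ln (backup (exp_ret_inf p r \<beta> \<theta>) s a) / \<beta>"
  by (simp add: soft_Q_def backup_def)

lemma soft_V_eq_soft_Q: "soft_V p r \<beta> \<theta> s = soft_Q p r \<beta> \<theta> s (\<theta> s)"
proof -
  have "backup (exp_ret_inf p r \<beta> \<theta>) s (\<theta> s) = exp_ret_inf p r \<beta> \<theta> s"
    using bellman_exp_ret_inf[of \<theta>] unfolding bellman_def by metis
  then show ?thesis by (simp add: soft_V_def soft_Q_eq_backup)
qed

lemma backup_has_gradient: "\<exists>D. GDERIV (backup f s) a :> D"
proof -
  obtain Gr where Gr: "\<And>a. GDERIV (r s) a :> Gr a"
    using episodic unfolding episodic_mdp_def C1_real_def by blast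
  have "\<forall>s'. \<exists>G. \<forall>a. GDERIV (\<lambda>a. p s a s') a :> G a"
    using episodic unfolding episodic_mdp_def C1_real_def by blast
  then obtain Gp where Gp: "\<And>s' a. GDERIV (\<lambda>a. p s a s') a :> Gp s' a"
    by metis
  have exp_reward: "GDERIV (\<lambda>a. exp (\<beta> * r s a)) a :> (exp (\<beta> * r s a) * \<beta>) *\<^sub>R Gr a"
    by (rule GDERIV_DERIV_compose[OF Gr]) (auto intro!: derivative_eq_intros)
  have expectation: "GDERIV (\<lambda>a. \<Sum>s'\<in>UNIV. p s a s' * f s') a :> (\<Sum>s'\<in>UNIV. f s' *\<^sub>R Gp s' a)"
    by (rule GDERIV_sum) (rule GDERIV_subst[OF GDERIV_mult[OF Gp GDERIV_const]], simp)
  from GDERIV_mult[OF exp_reward expectation] show ?thesis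
    unfolding backup_def[abs_def] by blast
qed

lemma soft_Q_has_gradient:
  assumes "\<beta> \<noteq> 0"
  shows "\<exists>D. GDERIV (soft_Q p r \<beta> \<theta> s) a :> D"
proof -
  define W where "W = exp_ret_inf p r \<beta> \<theta>"
  obtain D where D: "GDERIV (backup W s) a :> D"
    using backup_has_gradient by blast
  have "0 < backup W s a"
    by (rule backup_pos) (simp add: W_def exp_ret_inf_pos)
  then have "((\<lambda>y. ln y / \<beta>) has_real_derivative 1 / backup W s a / \<beta>) (at (backup W s a))"
    using assms by (auto intro!: derivative_eq_intros)
  from GDERIV_DERIV_compose[OF D this]
  show ?thesis
    unfolding W_def soft_Q_eq_backup[abs_def] by blast
qed

lemma soft_policy_improvement:
  assumes "\<beta> \<noteq> 0" and improving: "\<And>x. soft_V p r \<beta> \<theta> x \<le> soft_Q p r \<beta> \<theta> x (\<mu> x)"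
  shows "soft_V p r \<beta> \<theta> s \<le> soft_V p r \<beta> \<mu> s"
proof -
  define W where "W = exp_ret_inf p r \<beta> \<theta>"
  have W_pos: "0 < W x" for x
    by (simp add: W_def exp_ret_inf_pos)
  have bellman_W_pos: "0 < bellman \<mu> W x" for x
    unfolding bellman_def by (rule backup_pos[OF W_pos])
  have step: "ln (W x) / \<beta> \<le> ln (bellman \<mu> W x) / \<beta>" for x
    using improving[of x] by (simp add: W_def soft_V_def soft_Q_eq_backup bellman_def)
  have exp_ret_inf_\<mu>: "exp_ret_inf p r \<beta> \<mu> = (bellman \<mu> ^^ T) W"
    by (rule bellman_pow_horizon[symmetric]) (simp add: W_def exp_ret_inf_terminal)
  then have V_\<mu>: "soft_V p r \<beta> \<mu> s = ln ((bellman \<mu> ^^ T) W s) / \<beta>"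
    by (simp add: soft_V_def)
  have V_\<theta>: "soft_V p r \<beta> \<theta> s = ln (W s) / \<beta>"
    by (simp add: W_def soft_V_def)
  have V_\<mu>_pos: "0 < (bellman \<mu> ^^ T) W s"
    using exp_ret_inf_pos exp_ret_inf_\<mu> by metis
  consider "0 < \<beta>" | "\<beta> < 0"
    using assms(1) by linarith
  then show ?thesis
  proof cases
    case 1
    then have "W \<le> bellman \<mu> W"
      using step W_pos bellman_W_pos by (simp add: le_fun_def divide_le_cancel)
    then have "W s \<le> (bellman \<mu> ^^ T) W s"
      using funpow_mono2[OF mono_bellman, of 0 T W W] by (simp add: le_fun_def)
    then show ?thesis
      using 1 W_pos V_\<mu>_pos by (simp add: V_\<mu> V_\<theta> divide_right_mono)
  next
    case 2
    then have "bellman \<mu> W \<le> W"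
      using step W_pos bellman_W_pos by (simp add: le_fun_def divide_le_cancel)
    then have "(bellman \<mu> ^^ T) W s \<le> W s"
      using funpow_le_self[OF mono_bellman] by (simp add: le_fun_def)
    then show ?thesis
      using 2 W_pos V_\<mu>_pos by (simp add: V_\<mu> V_\<theta> divide_right_mono_neg)
  qed
qed

end

theorem theorem3:
  fixes p :: "'s::finite \<Rightarrow> real^'m \<Rightarrow> 's \<Rightarrow> real"
    and r :: "'s \<Rightarrow> real^'m \<Rightarrow> real"
    and Sterm :: "'s set" and T :: nat and \<beta> :: real
    and \<rho> :: "'s \<Rightarrow> real" and \<theta> :: "'s \<Rightarrow> real^'m"
  assumes "episodic_mdp p r Sterm T"
    and "\<beta> \<noteq> 0"
    and "\<forall>s. 0 \<le> \<rho> s"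
  shows "\<exists>\<epsilon>>0. \<forall>\<alpha>. 0 < \<alpha> \<and> \<alpha> < \<epsilon> \<longrightarrow>
           (\<forall>s. soft_V p r \<beta> \<theta> s
                 \<le> soft_V p r \<beta> (\<lambda>s'. \<theta> s' + \<alpha> *\<^sub>R pg_dir p r \<beta> \<rho> \<theta> s') s)"
proof -
  interpret episodic p r Sterm T \<beta>
    using assms(1) by unfold_locales
  have "\<forall>\<^sub>F \<alpha> in at_right 0. soft_V p r \<beta> \<theta> s \<le> soft_Q p r \<beta> \<theta> s (\<theta> s + \<alpha> *\<^sub>R pg_dir p r \<beta> \<rho> \<theta> s)"
    for s
  proof -
    have "GDERIV (soft_Q p r \<beta> \<theta> s) (\<theta> s) :> grad (soft_Q p r \<beta> \<theta> s) (\<theta> s)"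
      unfolding grad_def by (rule someI_ex) (rule soft_Q_has_gradient[OF assms(2)])
    from gradient_step_nondecreasing[OF assms(3)[rule_format] this]
    show ?thesis by (simp add: pg_dir_def soft_V_eq_soft_Q)
  qed
  then have "\<forall>\<^sub>F \<alpha> in at_right 0. \<forall>s. soft_V p r \<beta> \<theta> s \<le> soft_Q p r \<beta> \<theta> s (\<theta> s + \<alpha> *\<^sub>R pg_dir p r \<beta> \<rho> \<theta> s)"
    by (rule eventually_all_finite)
  then have "\<forall>\<^sub>F \<alpha> in at_right 0. \<forall>s. soft_V p r \<beta> \<theta> s \<le> soft_V p r \<beta> (\<lambda>s'. \<theta> s' + \<alpha> *\<^sub>R pg_dir p r \<beta> \<rho> \<theta> s') s"
    by (rule eventually_mono) (auto intro: soft_policy_improvement[OF assms(2)])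
  then show ?thesis
    unfolding eventually_at_right_field by auto
qed

end
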